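(* Let $\{a_k\}_{k\ge1}$ be a sequence of positive numbers and, for each $N\ge2$, let $T_N$ be the number of i.i.d. draws needed to observe all $N$ types when type $k\in\{1,\dots,N\}$ has probability $a_k/\sum_{i=1}^N a_i$. Then the sequence $\{T_N\}_{N\ge2}$ is stochastically increasing: $P(T_{N+1}\ge k)\ge P(T_N\ge k)$ for all integers $k$ and all $N\ge2$. *)

theory Defs
  imports "HOL-Probability.Probability"
begin

definition draw_pmf :: "(nat \<Rightarrow> real) \<Rightarrow> nat \<Rightarrow> nat pmf" where
  "draw_pmf a N = embed_pmf (\<lambda>j. if j \<in> {1..N} then a j / (\<Sum>i=1..N. a i) else 0)"

text \<open>P(T_N \<ge> k): T_N \<ge> k holds iff the first k-1 i.i.d. draws do not yet contain all N types
  (for k \<le> 1 this is the empty prefix, giving probability 1).\<close>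
definition coupon_tail :: "(nat \<Rightarrow> real) \<Rightarrow> nat \<Rightarrow> int \<Rightarrow> real" where
  "coupon_tail a N k =
     measure_pmf.prob (replicate_pmf (nat (k - 1)) (draw_pmf a N)) {xs. \<not> {1..N} \<subseteq> set xs}"

end

theory Submission
  imports Defs
begin

text \<open>Couple a draw X among N + 1 types with a draw Y among N types by setting Y = X when
  X \<le> N and redrawing Y independently otherwise: restarting a rejected draw does not change
  the conditional law, so Y really is a draw among N types. For n independent copies of the
  pair, every type in {1..N} seen among the X's is seen among the Y's, so whenever the Y's
  miss a type, so do the X's.\<close>

lemma rel_pmf_replicate_pmf:
  assumes "rel_pmf R p q"
  shows "rel_pmf (list_all2 R) (replicate_pmf n p) (replicate_pmf n q)"
proof (induction n)
  case (Suc n)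
  show ?case
    by (simp, intro rel_pmf_bindI[OF assms] rel_pmf_bindI[OF Suc.IH]) simp
qed simp

lemma bind_pmf_restart_cond_pmf:
  assumes "set_pmf p \<inter> A \<noteq> {}"
  shows "bind_pmf p (\<lambda>x. if x \<in> A then return_pmf x else cond_pmf p A) = cond_pmf p A"
proof (rule pmf_eqI)
  fix i
  let ?c = "pmf (cond_pmf p A) i"
  have "pmf (bind_pmf p (\<lambda>x. if x \<in> A then return_pmf x else cond_pmf p A)) i
      = measure_pmf.expectation p (\<lambda>x. indicator (A \<inter> {i}) x + ?c * indicator (- A) x)"
    by (auto simp: pmf_bind indicator_def intro!: Bochner_Integration.integral_cong)
  also have "\<dots> = measure p (A \<inter> {i}) + ?c * measure p (- A)"
    by (subst Bochner_Integration.integral_add)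
       (auto intro!: integrable_real_indicator simp: measure_pmf.emeasure_eq_measure)
  also have "\<dots> = ?c"
  proof -
    have P: "measure p A \<noteq> 0" using measure_measure_pmf_not_zero[OF assms] .
    have "measure p (- A) = 1 - measure p A"
      using measure_pmf.prob_compl[of A p] by (simp add: Compl_eq_Diff_UNIV)
    then show ?thesis using P
      by (auto simp: pmf_cond[OF assms] measure_pmf_single field_simps simp flip: distrib_left)
  qed
  finally show "pmf (bind_pmf p (\<lambda>x. if x \<in> A then return_pmf x else cond_pmf p A)) i = ?c" .
qed

lemma rel_pmf_cond_pmf_restart:
  assumes "set_pmf p \<inter> A \<noteq> {}"
  shows "rel_pmf (\<lambda>y x. x \<in> A \<longrightarrow> y = x) (cond_pmf p A) p"
proof
  let ?pq = "map_pmf (\<lambda>(x, y). (if x \<in> A then x else y, x)) (pair_pmf p (cond_pmf p A))"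
  show "\<And>y x. (y, x) \<in> set_pmf ?pq \<Longrightarrow> x \<in> A \<longrightarrow> y = x"
    by auto
  show "map_pmf snd ?pq = p"
    by (simp add: pmf.map_comp case_prod_unfold o_def map_fst_pair_pmf)
  have "map_pmf fst ?pq = bind_pmf p (\<lambda>x. if x \<in> A then return_pmf x else cond_pmf p A)"
    by (auto simp: pair_pmf_def map_bind_pmf bind_return_pmf' map_pmf_def[symmetric]
        pmf.map_comp o_def map_pmf_const intro: bind_pmf_cong)
  then show "map_pmf fst ?pq = cond_pmf p A"
    using bind_pmf_restart_cond_pmf[OF assms] by simp
qed

lemma list_all2_agree_on_set_inter:
  assumes "list_all2 (\<lambda>y x. x \<in> C \<longrightarrow> y = x) ys xs"
  shows "C \<inter> set xs \<subseteq> set ys"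
  using assms by (induction rule: list_all2_induct) auto

lemma prob_replicate_cond_pmf_not_covering_le:
  assumes "set_pmf p \<inter> C \<noteq> {}" and "C \<subseteq> D"
  shows "measure_pmf.prob (replicate_pmf n (cond_pmf p C)) {ys. \<not> C \<subseteq> set ys}
       \<le> measure_pmf.prob (replicate_pmf n p) {xs. \<not> D \<subseteq> set xs}"
proof -
  let ?R = "list_all2 (\<lambda>y x. x \<in> C \<longrightarrow> y = x)"
  have "rel_pmf ?R (replicate_pmf n (cond_pmf p C)) (replicate_pmf n p)"
    by (intro rel_pmf_replicate_pmf rel_pmf_cond_pmf_restart assms(1))
  then have "measure_pmf.prob (replicate_pmf n (cond_pmf p C)) {ys. \<not> C \<subseteq> set ys}
      \<le> measure_pmf.prob (replicate_pmf n p) {xs. \<exists>ys\<in>{ys. \<not> C \<subseteq> set ys}. ?R ys xs}"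
    by (rule rel_pmf_measureD)
  also have "\<dots> \<le> measure_pmf.prob (replicate_pmf n p) {xs. \<not> D \<subseteq> set xs}"
  proof (rule measure_pmf.finite_measure_mono)
    show "{xs. \<exists>ys\<in>{ys. \<not> C \<subseteq> set ys}. ?R ys xs} \<subseteq> {xs. \<not> D \<subseteq> set xs}"
      using list_all2_agree_on_set_inter assms(2) by blast
  qed simp
  finally show ?thesis .
qed

lemma pmf_draw_pmf:
  assumes pos: "\<forall>i\<in>{1..N}. 0 < a i" and "N \<ge> 1"
  shows "pmf (draw_pmf a N) j = (if j \<in> {1..N} then a j / (\<Sum>i=1..N. a i) else 0)"
  unfolding draw_pmf_def
proof (rule pmf_embed_pmf)
  let ?f = "\<lambda>j. if j \<in> {1..N} then a j / (\<Sum>i=1..N. a i) else 0"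
  have S: "(\<Sum>i=1..N. a i) > 0"
    using assms by (intro sum_pos) auto
  then show "\<And>j. 0 \<le> ?f j"
    using pos by (simp add: less_imp_le)
  have "(\<integral>\<^sup>+j. ennreal (?f j) \<partial>count_space UNIV) = (\<Sum>j\<in>{1..N}. ennreal (?f j))"
    by (rule nn_integral_count_space') auto
  also have "\<dots> = ennreal (\<Sum>j\<in>{1..N}. a j / (\<Sum>i=1..N. a i))"
    using S pos by (subst sum_ennreal[symmetric]) (auto simp: less_imp_le)
  also have "(\<Sum>j\<in>{1..N}. a j / (\<Sum>i=1..N. a i)) = 1"
    using S by (simp flip: sum_divide_distrib)
  finally show "(\<integral>\<^sup>+j. ennreal (?f j) \<partial>count_space UNIV) = 1"
    by simp
qed

lemma set_pmf_draw_pmf: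
  assumes "\<forall>i\<in>{1..N}. 0 < a i" and "N \<ge> 1"
  shows "set_pmf (draw_pmf a N) = {1..N}"
proof -
  have "(\<Sum>i=1..N. a i) > 0"
    using assms by (intro sum_pos) auto
  then have "x \<in> set_pmf (draw_pmf a N) \<longleftrightarrow> x \<in> {1..N}" for x
    unfolding set_pmf_iff pmf_draw_pmf[OF assms] using assms(1) by force
  then show ?thesis
    by blast
qed

lemma draw_pmf_eq_cond_pmf:
  assumes pos: "\<forall>i\<in>{1..N+1}. 0 < a i" and "N \<ge> 1"
  shows "draw_pmf a N = cond_pmf (draw_pmf a (N + 1)) {1..N}"
proof (rule pmf_eqI)
  fix j
  let ?p = "draw_pmf a (N + 1)" and ?S = "\<Sum>i=1..N. a i"
  have S: "?S > 0"
    using assms by (intro sum_pos) auto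
  \<comment> \<open>stated for \<open>Suc N\<close>, the simp normal form of \<open>N + 1\<close>, so that it rewrites\<close>
  have pmf_p: "pmf (draw_pmf a (Suc N)) i = (if i \<in> {1..N+1} then a i / (?S + a (N+1)) else 0)"
    for i
    using pmf_draw_pmf[of "N+1" a i] pos by simp
  have nonempty: "set_pmf ?p \<inter> {1..N} \<noteq> {}"
    using pos \<open>N \<ge> 1\<close> by (subst set_pmf_draw_pmf) auto
  have "measure_pmf.prob ?p {1..N} = ?S / (?S + a (N+1))"
    by (simp add: measure_measure_pmf_finite pmf_p sum_divide_distrib)
  moreover have "pmf (draw_pmf a N) j = (if j \<in> {1..N} then a j / ?S else 0)"
    using pos \<open>N \<ge> 1\<close> by (intro pmf_draw_pmf) auto
  moreover have "0 < ?S + a (N+1)"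
    using S bspec[OF pos, of "N+1"] by simp
  moreover have "pmf (cond_pmf ?p {1..N}) j
      = (if j \<in> {1..N} then pmf ?p j / measure_pmf.prob ?p {1..N} else 0)"
    by (rule pmf_cond[OF nonempty])
  ultimately show "pmf (draw_pmf a N) j = pmf (cond_pmf ?p {1..N}) j"
    using S by (simp add: pmf_p)
qed

theorem mainTheorem6:
  fixes a :: "nat \<Rightarrow> real" and N :: nat and k :: int
  assumes "\<And>i. i \<ge> 1 \<Longrightarrow> a i > 0"
    and "N \<ge> 2"
  shows "coupon_tail a (N + 1) k \<ge> coupon_tail a N k"
proof -
  define n where "n = nat (k - 1)"
  define p where "p = draw_pmf a (N + 1)"
  have pos: "\<forall>i\<in>{1..N+1}. 0 < a i" and "N \<ge> 1"
    using assms by auto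
  have "set_pmf p \<inter> {1..N} \<noteq> {}"
    unfolding p_def using pos \<open>N \<ge> 1\<close> by (subst set_pmf_draw_pmf) auto
  have "draw_pmf a N = cond_pmf p {1..N}"
    unfolding p_def using pos \<open>N \<ge> 1\<close> by (rule draw_pmf_eq_cond_pmf)
  then have "coupon_tail a N k
      = measure_pmf.prob (replicate_pmf n (cond_pmf p {1..N})) {ys. \<not> {1..N} \<subseteq> set ys}"
    unfolding coupon_tail_def n_def by simp
  also have "\<dots> \<le> measure_pmf.prob (replicate_pmf n p) {xs. \<not> {1..N+1} \<subseteq> set xs}"
    using \<open>set_pmf p \<inter> {1..N} \<noteq> {}\<close> by (rule prob_replicate_cond_pmf_not_covering_le) auto
  also have "\<dots> = coupon_tail a (N + 1) k"
    unfolding coupon_tail_def n_def p_def ..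
  finally show ?thesis .
qed

end
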